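(* Let $(\mathcal A,\varphi,\mathcal F,\Phi)$ be a ncps of type B$'$ with associated infinitesimal ncps $(\mathcal B,\varphi,\varphi')$. Let $q\in\mathcal F$ satisfy $q^2=q$, $\Phi(q)=1$, and suppose $(\mathcal A,\{q\})$ is cyclic-antimonotone independent. Put $p:=1_{\mathcal B}-q$ and $\tilde a:=pap$ for $a\in\mathcal A$. Then for any $n\in\mathbb N$ and $a_1,\dots,a_n\in\mathcal A$, $$\varphi'(\tilde a_1\tilde a_2\cdots\tilde a_n)=-\sum_{\pi\in\mathrm{NC}(n)}|\mathrm{Kr}(\pi)|\,\kappa_\pi[a_1,a_2,\dots,a_n].$$
   Context: Ncps of type B$'$ $(\mathcal A,\varphi,\mathcal F,\Phi)$: $\mathcal A$ unital complex algebra, $\varphi:\mathcal A\to\mathbb C$ linear with $\varphi(1_{\mathcal A})=1$, $\mathcal F$ an algebra which is an $\mathcal A$-bimodule compatible with its multiplication, $\Phi:\mathcal F\to\mathbb C$ linear. $\mathcal B=\mathcal A\oplus\mathcal F$ with product $(a_1,f_1)(a_2,f_2)=(a_1a_2,a_1f_2+f_1a_2+f_1f_2)$ and unit $1_{\mathcal A}$; $\varphi(a+f):=\varphi(a)$, $\varphi'(a+f):=\Phi(f)$. $(\mathcal A,\{q\})$ cyclic-antimonotone independent means (with the subalgebra generated by $q$, which is $\mathbb Cq$) $\Phi(a_0qa_1q\cdots a_{n-1}qa_n)=\varphi(a_0a_n)\prod_{i=1}^{n-1}\varphi(a_i)\,\Phi(q)$ for all $n\ge1$, $a_l\in\mathcal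 A$. $\mathrm{NC}(n)$ is the lattice of noncrossing partitions of $\{1,\dots,n\}$; $\kappa_\pi$ are the free cumulants of $(\mathcal A,\varphi)$: multilinear maps defined by $\varphi(a_1\cdots a_n)=\sum_{\pi\in\mathrm{NC}(n)}\kappa_\pi[a_1,\dots,a_n]$ with $\kappa_\pi=\prod_{V\in\pi}\kappa_{|V|}$ applied to the arguments indexed by $V$ in increasing order. $\mathrm{Kr}(\pi)$ is the Kreweras complement of $\pi$ and $|\mathrm{Kr}(\pi)|$ its number of blocks, equal to $n+1-|\pi|$. *)

theory Defs
  imports Complex_Main "HOL-Library.Disjoint_Sets"
begin

definition complex_algebra :: "(complex \<Rightarrow> 'a::ring \<Rightarrow> 'a) \<Rightarrow> bool" where
  "complex_algebra sm \<longleftrightarrow>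
     (\<forall>c x y. sm c (x + y) = sm c x + sm c y) \<and>
     (\<forall>c d x. sm (c + d) x = sm c x + sm d x) \<and>
     (\<forall>c d x. sm c (sm d x) = sm (c * d) x) \<and>
     (\<forall>x. sm 1 x = x) \<and>
     (\<forall>c x y. sm c (x * y) = sm c x * y) \<and>
     (\<forall>c x y. sm c (x * y) = x * sm c y)"

definition bimodule_algebra ::
  "(complex \<Rightarrow> 'a::ring_1 \<Rightarrow> 'a) \<Rightarrow> (complex \<Rightarrow> 'f::ring \<Rightarrow> 'f)
   \<Rightarrow> ('a \<Rightarrow> 'f \<Rightarrow> 'f) \<Rightarrow> ('f \<Rightarrow> 'a \<Rightarrow> 'f) \<Rightarrow> bool" where
  "bimodule_algebra smA smF L R \<longleftrightarrow>
     (\<forall>a f g. L a (f + g) = L a f + L a g) \<and>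
     (\<forall>a b f. L (a + b) f = L a f + L b f) \<and>
     (\<forall>a b f. L (a * b) f = L a (L b f)) \<and>
     (\<forall>f. L 1 f = f) \<and>
     (\<forall>a f g. R (f + g) a = R f a + R g a) \<and>
     (\<forall>a b f. R f (a + b) = R f a + R f b) \<and>
     (\<forall>a b f. R f (a * b) = R (R f a) b) \<and>
     (\<forall>f. R f 1 = f) \<and>
     (\<forall>a b f. R (L a f) b = L a (R f b)) \<and>
     (\<forall>c a f. L (smA c a) f = smF c (L a f) \<and> L a (smF c f) = smF c (L a f)) \<and>
     (\<forall>c a f. R f (smA c a) = smF c (R f a) \<and> R (smF c f) a = smF c (R f a)) \<and>
     (\<forall>a f g. L a (f * g) = L a f * g) \<and>
     (\<forall>a f g. R (f * g) a = f * R g a) \<and>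
     (\<forall>a f g. R f a * g = f * L a g)"

definition complex_linear_functional :: "(complex \<Rightarrow> 'a::ring \<Rightarrow> 'a) \<Rightarrow> ('a \<Rightarrow> complex) \<Rightarrow> bool" where
  "complex_linear_functional sm \<psi> \<longleftrightarrow>
     (\<forall>x y. \<psi> (x + y) = \<psi> x + \<psi> y) \<and> (\<forall>c x. \<psi> (sm c x) = c * \<psi> x)"

definition ncps_typeB' ::
  "(complex \<Rightarrow> 'a::ring_1 \<Rightarrow> 'a) \<Rightarrow> (complex \<Rightarrow> 'f::ring \<Rightarrow> 'f)
   \<Rightarrow> ('a \<Rightarrow> 'f \<Rightarrow> 'f) \<Rightarrow> ('f \<Rightarrow> 'a \<Rightarrow> 'f) \<Rightarrow> ('a \<Rightarrow> complex) \<Rightarrow> ('f \<Rightarrow> complex) \<Rightarrow> bool" where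
  "ncps_typeB' smA smF L R \<phi> \<Phi> \<longleftrightarrow>
     complex_algebra smA \<and> complex_algebra smF \<and> bimodule_algebra smA smF L R \<and>
     complex_linear_functional smA \<phi> \<and> \<phi> 1 = 1 \<and> complex_linear_functional smF \<Phi>"

definition Bmult :: "('a::ring_1 \<Rightarrow> 'f::ring \<Rightarrow> 'f) \<Rightarrow> ('f \<Rightarrow> 'a \<Rightarrow> 'f)
    \<Rightarrow> 'a \<times> 'f \<Rightarrow> 'a \<times> 'f \<Rightarrow> 'a \<times> 'f" where
  "Bmult L R x y = (fst x * fst y, L (fst x) (snd y) + R (snd x) (fst y) + snd x * snd y)"

definition Bprod :: "('a::ring_1 \<Rightarrow> 'f::ring \<Rightarrow> 'f) \<Rightarrow> ('f \<Rightarrow> 'a \<Rightarrow> 'f) \<Rightarrow> ('a \<times> 'f) list \<Rightarrow> 'a \<times> 'f" where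
  "Bprod L R xs = foldr (Bmult L R) xs (1, 0)"

definition phi' :: "('f \<Rightarrow> complex) \<Rightarrow> 'a \<times> 'f \<Rightarrow> complex" where
  "phi' \<Phi> x = \<Phi> (snd x)"

definition alt_word :: "'f::ring \<Rightarrow> (nat \<Rightarrow> 'a::ring_1) \<Rightarrow> nat \<Rightarrow> ('a \<times> 'f) list" where
  "alt_word q a n = concat (map (\<lambda>i. [(a i, 0), (0, q)]) [0..<n]) @ [(a n, 0)]"

definition cyclic_antimonotone_indep ::
  "('a::ring_1 \<Rightarrow> 'f::ring \<Rightarrow> 'f) \<Rightarrow> ('f \<Rightarrow> 'a \<Rightarrow> 'f) \<Rightarrow> ('a \<Rightarrow> complex) \<Rightarrow> ('f \<Rightarrow> complex) \<Rightarrow> 'f \<Rightarrow> bool" where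
  "cyclic_antimonotone_indep L R \<phi> \<Phi> q \<longleftrightarrow>
     (\<forall>n::nat. n \<ge> 1 \<longrightarrow> (\<forall>a::nat \<Rightarrow> 'a.
        \<Phi> (snd (Bprod L R (alt_word q a n))) =
          \<phi> (a 0 * a n) * (\<Prod>i\<in>{1..<n}. \<phi> (a i)) * \<Phi> q))"

definition noncrossing :: "nat set set \<Rightarrow> bool" where
  "noncrossing \<pi> \<longleftrightarrow>
     (\<forall>V\<in>\<pi>. \<forall>W\<in>\<pi>. V \<noteq> W \<longrightarrow>
        \<not> (\<exists>a b c d. a < b \<and> b < c \<and> c < d \<and> a \<in> V \<and> c \<in> V \<and> b \<in> W \<and> d \<in> W))"

definition NC :: "nat \<Rightarrow> nat set set set" where
  "NC n = {\<pi>. partition_on {1..n} \<pi> \<and> noncrossing \<pi>}"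

text \<open>\<open>\<kappa>_\<pi>[a_1,\<dots>,a_n]\<close>, where \<open>\<kappa>\<close> maps a list of arguments \<open>[b_1,\<dots>,b_m]\<close>
  to \<open>\<kappa>_m[b_1,\<dots>,b_m]\<close>; the arguments of each block are taken in increasing order.\<close>
definition kappa_pi :: "('a list \<Rightarrow> complex) \<Rightarrow> nat set set \<Rightarrow> (nat \<Rightarrow> 'a) \<Rightarrow> complex" where
  "kappa_pi \<kappa> \<pi> a = (\<Prod>V\<in>\<pi>. \<kappa> (map a (sorted_list_of_set V)))"

text \<open>\<open>\<kappa>\<close> is the family of free cumulants of \<open>(A, \<phi>)\<close>: the moment--cumulant formula
  \<open>\<phi>(a_1\<cdots>a_n) = \<Sum>_{\<pi>\<in>NC(n)} \<kappa>_\<pi>[a_1,\<dots>,a_n]\<close> for all \<open>n \<ge> 1\<close>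
  (this determines \<open>\<kappa>_n\<close> for all \<open>n \<ge> 1\<close> recursively).\<close>
definition free_cumulants :: "('a::ring_1 \<Rightarrow> complex) \<Rightarrow> ('a list \<Rightarrow> complex) \<Rightarrow> bool" where
  "free_cumulants \<phi> \<kappa> \<longleftrightarrow>
     (\<forall>n::nat. n \<ge> 1 \<longrightarrow> (\<forall>a::nat \<Rightarrow> 'a.
        \<phi> (prod_list (map a [1..<n+1])) = (\<Sum>\<pi>\<in>NC n. kappa_pi \<kappa> \<pi> a)))"

text \<open>Number of blocks of the Kreweras complement of \<open>\<pi> \<in> NC(n)\<close>, i.e.
  \<open>|Kr(\<pi>)| = n + 1 - |\<pi>|\<close>.\<close>
definition kreweras_card :: "nat \<Rightarrow> nat set set \<Rightarrow> nat" where
  "kreweras_card n \<pi> = n + 1 - card \<pi>"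

end

(*
  Write p = 1 - q.  As p is idempotent, the product of the compressions p a_i p is the word
  p a_1 p a_2 p ... a_n p, and multiplying out its n + 1 factors p gives a signed sum, over
  all S of positions 0..n, of the words obtained from a_1 ... a_n by inserting q after every
  position in S.  For S nonempty, cyclic-antimonotone independence evaluates Phi on such a word
  as a product of values of phi on the cyclic segments of S (the first and the last segment
  merged); the moment-cumulant formula and gluing along these classes, which form a
  noncrossing partition, turn the product into the sum of kappa_pi over the pi in NC(n)
  whose blocks each lie in one class.  After exchanging the sums, the coefficient of kappa_pi
  is the sum of (-1)^|S| over the nonempty S compatible with pi.  The n + 1 singletons give
  -(n + 1); grouping the other S by their extreme points s < t, the alternating sum over the
  interior points vanishes unless (s, t] is exactly the convex hull of a block of pi, which then
  gives +1.  So the coefficient is |pi| - (n + 1) = -|Kr(pi)|.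
*)
theory Submission
  imports Defs "HOL-Library.Product_Plus"
begin

section \<open>The algebra \<open>B = A \<oplus> F\<close>\<close>

locale bimodule_extension =
  fixes L :: "'a::ring_1 \<Rightarrow> 'f::ring \<Rightarrow> 'f" and R :: "'f \<Rightarrow> 'a \<Rightarrow> 'f"
  assumes L_add: "L a (f + g) = L a f + L a g"
    and L_add_left: "L (a + b) f = L a f + L b f"
    and L_mult: "L (a * b) f = L a (L b f)"
    and L_one: "L 1 f = f"
    and R_add: "R (f + g) a = R f a + R g a"
    and R_add_right: "R f (a + b) = R f a + R f b"
    and R_mult: "R f (a * b) = R (R f a) b"
    and R_one: "R f 1 = f"
    and R_L_commute: "R (L a f) b = L a (R f b)"
    and L_times: "L a (f * g) = L a f * g"
    and R_times: "R (f * g) a = f * R g a"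
    and R_times_L: "R f a * g = f * L a g"
begin

lemma L_zero [simp]: "L a 0 = 0" and L_zero_left [simp]: "L 0 f = 0"
  and R_zero [simp]: "R 0 a = 0" and R_zero_right [simp]: "R f 0 = 0"
  using L_add[of a 0 0] L_add_left[of 0 0 f] R_add[of 0 0 a] R_add_right[of f 0 0] by simp_all

lemma L_minus: "L a (- f) = - L a f" and L_minus_left: "L (- a) f = - L a f"
  and R_minus: "R (- f) a = - R f a" and R_minus_right: "R f (- a) = - R f a"
  using L_add[of a f "- f"] L_add_left[of a "- a" f] R_add[of f "- f" a] R_add_right[of f a "- a"]
  by (simp_all add: eq_neg_iff_add_eq_0 add.commute)

abbreviation Bmult_infix (infixl "\<odot>" 70) where "x \<odot> y \<equiv> Bmult L R x y"

lemma Bmult_assoc: "(x \<odot> y) \<odot> z = x \<odot> (y \<odot> z)"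
  by (simp add: Bmult_def L_add R_add L_mult R_mult R_L_commute L_times R_times R_times_L
      distrib_left distrib_right mult.assoc add_ac)

lemma Bmult_one_left [simp]: "(1, 0) \<odot> x = x" and Bmult_one_right [simp]: "x \<odot> (1, 0) = x"
  by (simp_all add: Bmult_def L_one R_one)

lemma Bmult_add_left: "(x + y) \<odot> z = x \<odot> z + y \<odot> z"
  by (simp add: Bmult_def L_add_left R_add distrib_right add_ac)

lemma Bmult_minus_left: "(- x) \<odot> z = - (x \<odot> z)" and Bmult_minus_right: "z \<odot> (- x) = - (z \<odot> x)"
  by (simp_all add: Bmult_def L_minus L_minus_left R_minus R_minus_right)

lemma Bmult_zero_left [simp]: "0 \<odot> z = 0"
  by (simp add: Bmult_def zero_prod_def)

lemma Bmult_sum_left: "(\<Sum>i\<in>I. x i) \<odot> z = (\<Sum>i\<in>I. x i \<odot> z)"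
  by (induction I rule: infinite_finite_induct) (simp_all add: Bmult_add_left)

lemma Bmult_one_minus: "x \<odot> (1, - f) = x - x \<odot> (0, f)"
  by (cases x) (simp add: Bmult_def L_minus R_one diff_diff_eq)

lemma Bmult_embed [simp]: "(a, 0) \<odot> (b, 0) = (a * b, 0)"
  by (simp add: Bmult_def)

lemma Bprod_Nil [simp]: "Bprod L R [] = (1, 0)"
  and Bprod_Cons [simp]: "Bprod L R (x # xs) = x \<odot> Bprod L R xs"
  by (simp_all add: Bprod_def)

lemma Bprod_append: "Bprod L R (xs @ ys) = Bprod L R xs \<odot> Bprod L R ys"
  by (induction xs) (simp_all add: Bmult_assoc)

end

lemma bimodule_algebra_imp_extension:
  "bimodule_algebra smA smF L R \<Longrightarrow> bimodule_extension L R"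
  unfolding bimodule_algebra_def bimodule_extension_def by simp

section \<open>Expanding \<open>p a\<^sub>1 p \<cdots> a\<^sub>n p\<close>\<close>

lemma sum_Pow_insert:
  assumes "finite A" "x \<notin> A"
  shows "(\<Sum>X\<in>Pow (insert x A). f X) = (\<Sum>X\<in>Pow A. f X) + (\<Sum>X\<in>Pow A. f (insert x X))"
proof -
  have "inj_on (insert x) (Pow A)"
    using assms(2) by (auto intro!: inj_onI simp: insert_ident)
  then show ?thesis
    unfolding Pow_insert using assms by (subst sum.union_disjoint) (auto simp: sum.reindex)
qed

definition count_below :: "nat set \<Rightarrow> nat \<Rightarrow> nat" where
  "count_below S x = card {s\<in>S. s < x}"

definition segment :: "nat \<Rightarrow> nat set \<Rightarrow> nat \<Rightarrow> nat set" where
  "segment n S j = {x\<in>{1..n}. count_below S x = j}"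

definition ordered_prod :: "(nat \<Rightarrow> 'a::monoid_mult) \<Rightarrow> nat set \<Rightarrow> 'a" where
  "ordered_prod a W = prod_list (map a (sorted_list_of_set W))"

definition signed :: "nat set \<Rightarrow> 'b::group_add \<Rightarrow> 'b" where
  "signed S x = (if even (card S) then x else - x)"

lemma count_below_le_card: "finite S \<Longrightarrow> count_below S x \<le> card S"
  unfolding count_below_def by (rule card_mono) auto

lemma count_below_mono: "finite S \<Longrightarrow> x \<le> y \<Longrightarrow> count_below S x \<le> count_below S y"
  unfolding count_below_def by (rule card_mono) auto

lemma count_below_eq_card: "\<forall>s\<in>S. s < x \<Longrightarrow> count_below S x = card S"
  unfolding count_below_def by (simp add: Collect_conj_eq Int_absorb2 subsetI)

lemma count_below_insert: "x \<le> m \<Longrightarrow> count_below (insert m S) x = count_below S x"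
  unfolding count_below_def by (rule arg_cong[where f = card]) auto

lemma finite_segment [simp]: "finite (segment n S j)"
  unfolding segment_def by simp

lemma segment_Suc:
  assumes "S \<subseteq> {0..n}"
  shows "segment (Suc n) S j = segment n S j \<union> (if j = card S then {Suc n} else {})"
proof -
  have "count_below S (Suc n) = card S"
    using assms by (intro count_below_eq_card) auto
  moreover have "{1..Suc n} = insert (Suc n) {1..n}" by auto
  ultimately show ?thesis unfolding segment_def by auto
qed

lemma segment_insert_Suc: "segment (Suc n) (insert (Suc n) S) j = segment (Suc n) S j"
  unfolding segment_def by (auto simp: count_below_insert)

lemma segment_beyond_card:
  assumes "finite S" "card S < j"
  shows "segment n S j = {}"
proof -
  have "count_below S x \<noteq> j" for x
    using count_below_le_card[OF assms(1), of x] assms(2) by simp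
  then show ?thesis by (simp add: segment_def)
qed

lemma sorted_list_of_set_Un_less:
  assumes "finite X" "finite Y" "\<forall>x\<in>X. \<forall>y\<in>Y. x < y"
  shows "sorted_list_of_set (X \<union> Y) = sorted_list_of_set X @ sorted_list_of_set Y"
  by (rule sorted_distinct_set_unique) (use assms in \<open>auto simp: sorted_append less_imp_le\<close>)

lemma ordered_prod_empty [simp]: "ordered_prod a {} = 1"
  by (simp add: ordered_prod_def)

lemma ordered_prod_Un_less:
  "finite X \<Longrightarrow> finite Y \<Longrightarrow> \<forall>x\<in>X. \<forall>y\<in>Y. x < y \<Longrightarrow>
     ordered_prod a (X \<union> Y) = ordered_prod a X * ordered_prod a Y"
  by (simp add: ordered_prod_def sorted_list_of_set_Un_less)

lemma ordered_prod_insert_max: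
  "finite X \<Longrightarrow> \<forall>x\<in>X. x < m \<Longrightarrow> ordered_prod a (insert m X) = ordered_prod a X * a m"
  using ordered_prod_Un_less[of X "{m}" a] by (simp add: ordered_prod_def)

context bimodule_extension
begin

lemma Bprod_alt_word:
  "Bprod L R (alt_word q b k) = Bprod L R (concat (map (\<lambda>i. [(b i, 0), (0, q)]) [0..<k])) \<odot> (b k, 0)"
  by (simp add: alt_word_def Bprod_append)

lemma Bprod_alt_word_Suc:
  "Bprod L R (alt_word q b (Suc k)) = Bprod L R (alt_word q b k) \<odot> (0, q) \<odot> (b (Suc k), 0)"
  by (simp add: alt_word_def Bprod_append Bmult_assoc)

lemma Bprod_alt_word_mult_last:
  "Bprod L R (alt_word q (b(k := b k * x)) k) = Bprod L R (alt_word q b k) \<odot> (x, 0)"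
proof -
  have "Bprod L R (alt_word q (b(k := y)) k) =
      Bprod L R (concat (map (\<lambda>i. [(b i, 0), (0, q)]) [0..<k])) \<odot> (y, 0)" for y
  proof -
    have "map (\<lambda>i. [((b(k := y)) i, 0), (0, q)]) [0..<k] = map (\<lambda>i. [(b i, 0), (0, q)]) [0..<k]"
      by simp
    then show ?thesis by (simp only: Bprod_alt_word[of _ "b(k := y)"] fun_upd_same)
  qed
  then show ?thesis by (simp only: Bprod_alt_word[of _ b] Bmult_assoc Bmult_embed)
qed

text \<open>\<open>q_word q a n S\<close> is the word \<open>a\<^sub>1 \<cdots> a\<^sub>n\<close> with a letter \<open>q\<close> inserted
  right after \<open>a\<^sub>s\<close> for every \<open>s \<in> S\<close> (after \<open>a\<^sub>0 := 1\<close> for \<open>s = 0\<close>); the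
  maximal \<open>q\<close>-free subwords are the products over the segments.\<close>
definition q_word :: "'f \<Rightarrow> (nat \<Rightarrow> 'a) \<Rightarrow> nat \<Rightarrow> nat set \<Rightarrow> 'a \<times> 'f" where
  "q_word q a n S = Bprod L R (alt_word q (\<lambda>j. ordered_prod a (segment n S j)) (card S))"

primrec p_word :: "'f \<Rightarrow> (nat \<Rightarrow> 'a) \<Rightarrow> nat \<Rightarrow> 'a \<times> 'f" where
  "p_word q a 0 = (1, - q)"
| "p_word q a (Suc n) = p_word q a n \<odot> (a (Suc n), 0) \<odot> (1, - q)"

lemma segment_prods_Suc:
  assumes "S \<subseteq> {0..n}"
  shows "(\<lambda>j. ordered_prod a (segment (Suc n) S j)) =
    (\<lambda>j. ordered_prod a (segment n S j))(card S := ordered_prod a (segment n S (card S)) * a (Suc n))"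
proof
  fix j
  have "\<forall>x\<in>segment n S j. x < Suc n" unfolding segment_def by auto
  then show "ordered_prod a (segment (Suc n) S j) =
    ((\<lambda>j. ordered_prod a (segment n S j))(card S := ordered_prod a (segment n S (card S)) * a (Suc n))) j"
    using segment_Suc[OF assms, of j] by (auto simp: ordered_prod_insert_max)
qed

lemma q_word_Suc:
  "S \<subseteq> {0..n} \<Longrightarrow> q_word q a (Suc n) S = q_word q a n S \<odot> (a (Suc n), 0)"
  unfolding q_word_def segment_prods_Suc by (rule Bprod_alt_word_mult_last)

lemma q_word_Suc_insert:
  assumes S: "S \<subseteq> {0..n}"
  shows "q_word q a (Suc n) (insert (Suc n) S) = q_word q a n S \<odot> (a (Suc n), 0) \<odot> (0, q)"
proof -
  have fin: "finite S" and "Suc n \<notin> S" using S finite_subset by auto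
  then have "card (insert (Suc n) S) = Suc (card S)" by simp
  moreover have "ordered_prod a (segment (Suc n) S (Suc (card S))) = 1"
    using segment_beyond_card[OF fin] by simp
  ultimately have "q_word q a (Suc n) (insert (Suc n) S) = q_word q a (Suc n) S \<odot> (0, q)"
    by (simp only: q_word_def segment_insert_Suc Bprod_alt_word_Suc) simp
  then show ?thesis using q_word_Suc[OF S] by simp
qed

lemma p_word_expansion: "p_word q a n = (\<Sum>S\<in>Pow {0..n}. signed S (q_word q a n S))"
proof (induction n)
  case 0
  have "Pow {0::nat} = {{}, {0}}" by auto
  then show ?case by (simp add: q_word_def alt_word_def segment_def signed_def)
next
  case (Suc n)
  have step: "signed S (q_word q a n S) \<odot> (a (Suc n), 0) \<odot> (1, - q) =
      signed S (q_word q a (Suc n) S) + signed (insert (Suc n) S) (q_word q a (Suc n) (insert (Suc n) S))"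
    if S: "S \<subseteq> {0..n}" for S
  proof -
    have "finite S" "Suc n \<notin> S" using S finite_subset by auto
    then have "card (insert (Suc n) S) = Suc (card S)" by simp
    then show ?thesis
      by (simp add: signed_def q_word_Suc[OF S] q_word_Suc_insert[OF S] Bmult_one_minus
          Bmult_minus_left)
  qed
  have "p_word q a (Suc n) = (\<Sum>S\<in>Pow {0..n}. signed S (q_word q a n S) \<odot> (a (Suc n), 0) \<odot> (1, - q))"
    by (simp only: p_word.simps Suc.IH Bmult_sum_left)
  also have "\<dots> = (\<Sum>S\<in>Pow {0..n}. signed S (q_word q a (Suc n) S)) +
      (\<Sum>S\<in>Pow {0..n}. signed (insert (Suc n) S) (q_word q a (Suc n) (insert (Suc n) S)))"
    by (simp only: sum.distrib[symmetric]) (rule sum.cong, simp_all add: step)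
  also have "\<dots> = (\<Sum>S\<in>Pow (insert (Suc n) {0..n}). signed S (q_word q a (Suc n) S))"
    by (rule sum_Pow_insert[symmetric]) simp_all
  also have "insert (Suc n) {0..n} = {0..Suc n}" by auto
  finally show ?case .
qed

lemma Bprod_sandwiches_eq_p_word:
  assumes "q * q = q" "n \<ge> 1"
  shows "Bprod L R (map (\<lambda>i. (1, - q) \<odot> ((a i, 0) \<odot> (1, - q))) [1..<n+1]) = p_word q a n"
  using assms(2)
proof (induction n rule: dec_induct)
  case base
  then show ?case by (simp add: Bmult_assoc)
next
  case (step m)
  have p_idem: "(1, - q) \<odot> (1, - q) = (1, - q)"
    by (simp add: Bmult_def L_one R_one assms(1))
  obtain k where "m = Suc k" using step(1) by (cases m) auto
  then have "p_word q a m \<odot> (1, - q) = p_word q a m" by (simp add: Bmult_assoc p_idem)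
  then show ?case
    using step.IH by (simp add: Bprod_append Bmult_assoc[symmetric])
qed

end

section \<open>Evaluating \<open>\<Phi>\<close> on the expanded words\<close>

text \<open>Letters before the first and after the last inserted \<open>q\<close> get the same label \<open>0\<close>:
  cyclic-antimonotone independence evaluates \<open>a\<^sub>0 q \<cdots> q a\<^sub>k\<close> through \<open>\<phi>(a\<^sub>0 a\<^sub>k)\<close>.\<close>
definition cyclic_label :: "nat set \<Rightarrow> nat \<Rightarrow> nat" where
  "cyclic_label S x = count_below S x mod card S"

lemma cyclic_label_less_card: "finite S \<Longrightarrow> S \<noteq> {} \<Longrightarrow> cyclic_label S x < card S"
  by (simp add: cyclic_label_def card_gt_0_iff)

lemma cyclic_class_zero:
  assumes "finite S" "S \<noteq> {}"
  shows "{x\<in>{1..n}. cyclic_label S x = 0} = segment n S 0 \<union> segment n S (card S)"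
proof -
  have "count_below S x mod card S = 0 \<longleftrightarrow> count_below S x = 0 \<or> count_below S x = card S" for x
    using count_below_le_card[OF assms(1), of x] assms
    by (auto simp: card_gt_0_iff elim!: dvdE dest!: mod_0_imp_dvd)
  then show ?thesis by (auto simp: cyclic_label_def segment_def)
qed

lemma cyclic_class_segment:
  assumes "0 < j" "j < card S"
  shows "{x\<in>{1..n}. cyclic_label S x = j} = segment n S j"
proof -
  have "finite S" using assms card_gt_0_iff by force
  have "count_below S x mod card S = j \<longleftrightarrow> count_below S x = j" for x
    using count_below_le_card[OF \<open>finite S\<close>, of x] assms
    by (cases "count_below S x = card S") (auto dest: le_neq_implies_less)
  then show ?thesis by (auto simp: cyclic_label_def segment_def)
qed

lemma segment_zero_less_segment_card:
  assumes "finite S" "S \<noteq> {}" "x \<in> segment n S 0" "y \<in> segment n S (card S)"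
  shows "x < y"
proof (rule ccontr)
  assume "\<not> x < y"
  then have "count_below S y \<le> count_below S x" by (simp add: count_below_mono[OF assms(1)])
  then show False using assms by (simp add: segment_def card_gt_0_iff)
qed

context bimodule_extension
begin

lemma Phi_q_word:
  assumes "cyclic_antimonotone_indep L R \<phi> \<Phi> q" "\<Phi> q = 1" and S: "finite S" "S \<noteq> {}"
  shows "\<Phi> (snd (q_word q a n S)) = (\<Prod>j<card S. \<phi> (ordered_prod a {x\<in>{1..n}. cyclic_label S x = j}))"
proof -
  let ?b = "\<lambda>j. ordered_prod a (segment n S j)" and ?k = "card S"
  have k: "?k \<ge> 1" using S by (simp add: Suc_leI card_gt_0_iff)
  have "\<Phi> (snd (q_word q a n S)) = \<phi> (?b 0 * ?b ?k) * (\<Prod>j\<in>{1..<?k}. \<phi> (?b j))"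
    using assms(1,2) k unfolding cyclic_antimonotone_indep_def q_word_def by simp
  also have "?b 0 * ?b ?k = ordered_prod a (segment n S 0 \<union> segment n S ?k)"
    by (rule ordered_prod_Un_less[symmetric]) (use segment_zero_less_segment_card[OF S] in auto)
  also have "segment n S 0 \<union> segment n S ?k = {x\<in>{1..n}. cyclic_label S x = 0}"
    by (rule cyclic_class_zero[OF S, symmetric])
  also have "(\<Prod>j\<in>{1..<?k}. \<phi> (?b j)) = (\<Prod>j\<in>{1..<?k}. \<phi> (ordered_prod a {x\<in>{1..n}. cyclic_label S x = j}))"
    by (intro prod.cong refl arg_cong[where f = "\<lambda>W. \<phi> (ordered_prod a W)"]
        cyclic_class_segment[symmetric]) auto
  finally show ?thesis
    using k by (simp add: lessThan_atLeast0 prod.atLeast_Suc_lessThan)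
qed

lemma snd_q_word_empty: "snd (q_word q a n {}) = 0"
  by (simp add: q_word_def alt_word_def)

end

section \<open>Noncrossing partitions of finite sets of naturals\<close>

definition NC_on :: "nat set \<Rightarrow> nat set set set" where
  "NC_on U = {\<pi>. partition_on U \<pi> \<and> noncrossing \<pi>}"

lemma NC_eq_NC_on: "NC n = NC_on {1..n}"
  by (simp add: NC_def NC_on_def)

lemma NC_on_empty [simp]: "NC_on {} = {{}}"
  by (auto simp: NC_on_def partition_on_empty noncrossing_def)

lemma finite_NC_on: "finite U \<Longrightarrow> finite (NC_on U)"
  unfolding NC_on_def by (rule finite_subset[OF _ finitely_many_partition_on]) auto

lemma NC_on_block_subset: "\<pi> \<in> NC_on U \<Longrightarrow> V \<in> \<pi> \<Longrightarrow> V \<subseteq> U"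
  and NC_on_block_nonempty: "\<pi> \<in> NC_on U \<Longrightarrow> V \<in> \<pi> \<Longrightarrow> V \<noteq> {}"
  and NC_on_covers: "\<pi> \<in> NC_on U \<Longrightarrow> x \<in> U \<Longrightarrow> \<exists>V\<in>\<pi>. x \<in> V"
  unfolding NC_on_def partition_on_def by auto

lemma NC_on_block_unique:
  "\<pi> \<in> NC_on U \<Longrightarrow> V \<in> \<pi> \<Longrightarrow> W \<in> \<pi> \<Longrightarrow> x \<in> V \<Longrightarrow> x \<in> W \<Longrightarrow> V = W"
  unfolding NC_on_def partition_on_def by (auto dest: disjointD)

lemma NC_on_finite_blocks: "finite U \<Longrightarrow> \<pi> \<in> NC_on U \<Longrightarrow> finite \<pi>"
  unfolding NC_on_def using finite_elements by blast

lemma card_NC_on_le: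
  assumes "finite U" "\<pi> \<in> NC_on U"
  shows "card \<pi> \<le> card U"
proof -
  have P: "partition_on U \<pi>" using assms(2) by (simp add: NC_on_def)
  have fin: "finite V" if "V \<in> \<pi>" for V
    using finite_subset[OF NC_on_block_subset[OF assms(2) that] assms(1)] .
  have "card \<pi> = (\<Sum>V\<in>\<pi>. 1)" by simp
  also have "\<dots> \<le> (\<Sum>V\<in>\<pi>. card V)"
    using fin NC_on_block_nonempty[OF assms(2)] by (intro sum_mono) (simp add: Suc_leI card_gt_0_iff)
  also have "\<dots> = card U" using product_partition[OF P fin] by simp
  finally show ?thesis .
qed

lemma noncrossingD:
  assumes "noncrossing \<pi>" "V \<in> \<pi>" "W \<in> \<pi>" "V \<noteq> W" "a < b" "b < c" "c < d"
    "a \<in> V" "c \<in> V" "b \<in> W" "d \<in> W"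
  shows False
  using assms unfolding noncrossing_def by metis

lemma NC_on_noncrossing: "\<pi> \<in> NC_on U \<Longrightarrow> noncrossing \<pi>"
  by (simp add: NC_on_def)

lemma strict_mono_on_inv_into:
  fixes h :: "nat \<Rightarrow> nat"
  assumes "strict_mono_on A h"
  shows "strict_mono_on (h ` A) (inv_into A h)"
proof (rule strict_mono_onI)
  fix x y assume "x \<in> h ` A" "y \<in> h ` A" "x < y"
  then obtain u v where "u \<in> A" "v \<in> A" "x = h u" "y = h v" by blast
  with assms \<open>x < y\<close> show "inv_into A h x < inv_into A h y"
    by (simp add: strict_mono_on_imp_inj_on strict_mono_on_less)
qed

lemma sorted_list_of_set_image_strict_mono:
  fixes h :: "nat \<Rightarrow> nat"
  assumes "strict_mono_on A h" "V \<subseteq> A" "finite V"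
  shows "sorted_list_of_set (h ` V) = map h (sorted_list_of_set V)"
proof -
  have mono: "strict_mono_on V h" using assms(1,2) by (rule monotone_on_subset)
  have "sorted_wrt (<) (map h (sorted_list_of_set V))"
    unfolding sorted_wrt_map using strict_sorted_list_of_set[of V]
    by (rule sorted_wrt_mono_rel[rotated]) (use mono assms(3) in \<open>simp add: strict_mono_onD\<close>)
  then show ?thesis
    using assms(3) by (intro sorted_distinct_set_unique) (simp_all add: strict_sorted_iff)
qed

lemma noncrossing_image:
  fixes h :: "nat \<Rightarrow> nat"
  assumes h: "strict_mono_on A h" and N: "noncrossing \<pi>" and sub: "\<And>V. V \<in> \<pi> \<Longrightarrow> V \<subseteq> A"
  shows "noncrossing ((`) h ` \<pi>)"
  unfolding noncrossing_def
proof (intro ballI impI notI)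
  fix V' W' assume "V' \<in> (`) h ` \<pi>" "W' \<in> (`) h ` \<pi>" "V' \<noteq> W'"
  then obtain V W where VW: "V \<in> \<pi>" "W \<in> \<pi>" "V \<noteq> W" "V' = h ` V" "W' = h ` W" by blast
  assume "\<exists>a b c d. a < b \<and> b < c \<and> c < d \<and> a \<in> V' \<and> c \<in> V' \<and> b \<in> W' \<and> d \<in> W'"
  then obtain a b c d where "a \<in> V" "c \<in> V" "b \<in> W" "d \<in> W" "h a < h b" "h b < h c" "h c < h d"
    using VW(4,5) by blast
  moreover have "a \<in> A" "b \<in> A" "c \<in> A" "d \<in> A" using calculation(1-4) sub VW(1,2) by auto
  ultimately have "a < b" "b < c" "c < d" by (simp_all add: strict_mono_on_less[OF h])
  then show False using noncrossingD[OF N VW(1-3)] \<open>a \<in> V\<close> \<open>c \<in> V\<close> \<open>b \<in> W\<close> \<open>d \<in> W\<close> by blast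
qed

lemma NC_on_image:
  fixes h :: "nat \<Rightarrow> nat"
  assumes h: "strict_mono_on A h" and \<pi>: "\<pi> \<in> NC_on A"
  shows "(`) h ` \<pi> \<in> NC_on (h ` A)"
proof -
  have P: "partition_on A \<pi>" using \<pi> by (simp add: NC_on_def)
  have "partition_on (h ` A) ((`) h ` \<pi> - {{}})"
    using P strict_mono_on_imp_inj_on[OF h] by (rule partition_on_inj_image)
  moreover have "{} \<notin> (`) h ` \<pi>" using partition_onD3[OF P] by auto
  moreover have "noncrossing ((`) h ` \<pi>)"
    using h NC_on_noncrossing[OF \<pi>] NC_on_block_subset[OF \<pi>] by (rule noncrossing_image)
  ultimately show ?thesis by (simp add: NC_on_def)
qed

lemma kappa_pi_image:
  fixes h :: "nat \<Rightarrow> nat"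
  assumes h: "strict_mono_on A h" and \<pi>: "\<pi> \<in> NC_on A" and "finite A"
  shows "kappa_pi \<kappa> ((`) h ` \<pi>) a = kappa_pi \<kappa> \<pi> (a \<circ> h)"
proof -
  have sub: "V \<subseteq> A" if "V \<in> \<pi>" for V using NC_on_block_subset[OF \<pi> that] .
  have "\<Union> \<pi> \<subseteq> A" using sub by blast
  then have "inj_on ((`) h) \<pi>"
    by (intro inj_on_image inj_on_subset[OF strict_mono_on_imp_inj_on[OF h]])
  moreover have "sorted_list_of_set (h ` V) = map h (sorted_list_of_set V)" if "V \<in> \<pi>" for V
    using sub[OF that] finite_subset[OF sub[OF that] \<open>finite A\<close>]
    by (intro sorted_list_of_set_image_strict_mono[OF h])
  ultimately show ?thesis
    unfolding kappa_pi_def by (simp add: prod.reindex)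
qed

lemma sum_NC_on_image:
  fixes h :: "nat \<Rightarrow> nat"
  assumes h: "strict_mono_on A h" and "finite A"
  shows "(\<Sum>\<rho>\<in>NC_on (h ` A). kappa_pi \<kappa> \<rho> a) = (\<Sum>\<pi>\<in>NC_on A. kappa_pi \<kappa> \<pi> (a \<circ> h))"
proof -
  have "inj_on ((`) h) (Pow A)"
    using strict_mono_on_imp_inj_on[OF h] by (rule inj_on_image_Pow)
  then have "inj_on ((`) ((`) h)) (NC_on A)"
    by (rule inj_on_image[OF inj_on_subset]) (auto dest: NC_on_block_subset)
  moreover have "NC_on (h ` A) \<subseteq> (`) ((`) h) ` NC_on A"
  proof
    fix \<rho> assume \<rho>: "\<rho> \<in> NC_on (h ` A)"
    let ?g = "inv_into A h"
    have "(`) ?g ` \<rho> \<in> NC_on A"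
      using NC_on_image[OF strict_mono_on_inv_into[OF h] \<rho>] strict_mono_on_imp_inj_on[OF h] by simp
    moreover have "h ` ?g ` V = V" if "V \<in> \<rho>" for V
      using NC_on_block_subset[OF \<rho> that] by (auto simp: image_image f_inv_into_f subset_iff)
    then have "(`) h ` (`) ?g ` \<rho> = \<rho>" by (simp add: image_image)
    ultimately show "\<rho> \<in> (`) ((`) h) ` NC_on A" by (metis image_eqI)
  qed
  moreover have "(`) ((`) h) ` NC_on A \<subseteq> NC_on (h ` A)"
    using NC_on_image[OF h] by blast
  ultimately show ?thesis
    by (simp add: sum.reindex kappa_pi_image[OF h _ \<open>finite A\<close>] subset_antisym)
qed

lemma moment_cumulant_ordered_prod:
  assumes "free_cumulants \<phi> \<kappa>" "\<phi> 1 = 1" "finite W"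
  shows "\<phi> (ordered_prod a W) = (\<Sum>\<rho>\<in>NC_on W. kappa_pi \<kappa> \<rho> a)"
proof (cases "W = {}")
  case True
  then show ?thesis by (simp add: kappa_pi_def assms(2))
next
  case False
  define m where "m = card W"
  define e where "e i = sorted_list_of_set W ! (i - 1)" for i
  have m: "m \<ge> 1" using False assms(3) by (simp add: m_def Suc_leI card_gt_0_iff)
  have enum: "map e [1..<m+1] = sorted_list_of_set W"
    by (rule nth_equalityI) (simp_all add: e_def m_def del: upt_Suc)
  have "strict_mono_on {1..m} e"
    using strict_sorted_list_of_set[of W]
    by (intro strict_mono_onI) (simp add: e_def m_def sorted_wrt_iff_nth_less)
  moreover have "e ` {1..m} = W"
    using enum assms(3) by (metis atLeastLessThanSuc_atLeastAtMost list.set_map set_upt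
        sorted_list_of_set.set_sorted_key_list_of_set Suc_eq_plus1)
  moreover have "\<phi> (prod_list (map (a \<circ> e) [1..<m+1])) = (\<Sum>\<pi>\<in>NC m. kappa_pi \<kappa> \<pi> (a \<circ> e))"
    using assms(1) m unfolding free_cumulants_def by blast
  ultimately show ?thesis
    using sum_NC_on_image[of "{1..m}" e \<kappa> a] enum
    by (simp add: ordered_prod_def NC_eq_NC_on flip: map_map)
qed

section \<open>Gluing along a noncrossing colouring\<close>

definition constant_on_blocks :: "(nat \<Rightarrow> 'b) \<Rightarrow> nat set set \<Rightarrow> bool" where
  "constant_on_blocks f \<pi> \<longleftrightarrow> (\<forall>V\<in>\<pi>. \<forall>x\<in>V. \<forall>y\<in>V. f x = f y)"

text \<open>The partition of \<open>U\<close> into the level sets of \<open>f\<close> is noncrossing.\<close>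
definition noncrossing_colouring :: "nat set \<Rightarrow> (nat \<Rightarrow> 'b) \<Rightarrow> bool" where
  "noncrossing_colouring U f \<longleftrightarrow>
     (\<forall>x\<in>U. \<forall>y\<in>U. \<forall>z\<in>U. \<forall>w\<in>U. x < y \<longrightarrow> y < z \<longrightarrow> z < w \<longrightarrow> f x = f z \<longrightarrow> f y = f w \<longrightarrow> f x = f y)"

lemma noncrossing_colouringD:
  "noncrossing_colouring U f \<Longrightarrow> x \<in> U \<Longrightarrow> y \<in> U \<Longrightarrow> z \<in> U \<Longrightarrow> w \<in> U \<Longrightarrow>
    x < y \<Longrightarrow> y < z \<Longrightarrow> z < w \<Longrightarrow> f x = f z \<Longrightarrow> f y = f w \<Longrightarrow> f x = f y"
  unfolding noncrossing_colouring_def by simp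

lemma kappa_pi_Un:
  "finite \<rho> \<Longrightarrow> finite \<tau> \<Longrightarrow> \<rho> \<inter> \<tau> = {} \<Longrightarrow> kappa_pi \<kappa> (\<rho> \<union> \<tau>) a = kappa_pi \<kappa> \<rho> a * kappa_pi \<kappa> \<tau> a"
  unfolding kappa_pi_def by (rule prod.union_disjoint)

lemma noncrossing_subset: "noncrossing \<pi> \<Longrightarrow> \<pi>' \<subseteq> \<pi> \<Longrightarrow> noncrossing \<pi>'"
  unfolding noncrossing_def by (meson subsetD)

lemma partition_on_Un:
  assumes "partition_on X \<rho>" "partition_on Y \<tau>" "X \<inter> Y = {}"
  shows "partition_on (X \<union> Y) (\<rho> \<union> \<tau>)"
proof -
  have "disjoint (\<rho> \<union> \<tau>)"
    using assms by (intro disjoint_union) (auto simp: partition_on_def)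
  then show ?thesis using assms by (auto simp: partition_on_def)
qed

lemma NC_on_restrict:
  assumes \<pi>: "\<pi> \<in> NC_on U" and "B \<subseteq> U" and split: "\<forall>V\<in>\<pi>. V \<subseteq> B \<or> V \<inter> B = {}"
  shows "{V\<in>\<pi>. V \<subseteq> B} \<in> NC_on B"
proof -
  have P: "partition_on U \<pi>" and N: "noncrossing \<pi>" using \<pi> by (auto simp: NC_on_def)
  have "\<Union>{V\<in>\<pi>. V \<subseteq> B} = B"
    using partition_onD1[OF P] \<open>B \<subseteq> U\<close> split by blast
  moreover have "disjoint {V\<in>\<pi>. V \<subseteq> B}"
    using partition_onD2[OF P] by (rule pairwise_subset) blast
  moreover have "{} \<notin> {V\<in>\<pi>. V \<subseteq> B}" using partition_onD3[OF P] by blast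
  moreover have "noncrossing {V\<in>\<pi>. V \<subseteq> B}" using N by (rule noncrossing_subset) blast
  ultimately show ?thesis by (simp add: NC_on_def partition_on_def)
qed

lemma NC_on_Un:
  assumes \<rho>: "\<rho> \<in> NC_on X" and \<tau>: "\<tau> \<in> NC_on Y" and "X \<inter> Y = {}"
    and no_crossing: "\<And>V W a b c d. V \<in> \<rho> \<Longrightarrow> W \<in> \<tau> \<Longrightarrow> a < b \<Longrightarrow> b < c \<Longrightarrow> c < d \<Longrightarrow>
        (a \<in> V \<and> c \<in> V \<and> b \<in> W \<and> d \<in> W) \<or> (a \<in> W \<and> c \<in> W \<and> b \<in> V \<and> d \<in> V) \<Longrightarrow> False"
  shows "\<rho> \<union> \<tau> \<in> NC_on (X \<union> Y)"
proof -
  have Pr: "partition_on X \<rho>" and Pt: "partition_on Y \<tau>" using \<rho> \<tau> by (auto simp: NC_on_def)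
  have "partition_on (X \<union> Y) (\<rho> \<union> \<tau>)"
    using Pr Pt \<open>X \<inter> Y = {}\<close> by (rule partition_on_Un)
  moreover have "noncrossing (\<rho> \<union> \<tau>)"
    unfolding noncrossing_def
  proof (intro ballI impI notI)
    fix V W assume V: "V \<in> \<rho> \<union> \<tau>" and W: "W \<in> \<rho> \<union> \<tau>" and "V \<noteq> W"
    assume "\<exists>a b c d. a < b \<and> b < c \<and> c < d \<and> a \<in> V \<and> c \<in> V \<and> b \<in> W \<and> d \<in> W"
    then obtain a b c d where abcd: "a < b" "b < c" "c < d" "a \<in> V" "c \<in> V" "b \<in> W" "d \<in> W"
      by blast
    consider "V \<in> \<rho>" "W \<in> \<rho>" | "V \<in> \<tau>" "W \<in> \<tau>" | "V \<in> \<rho>" "W \<in> \<tau>" | "V \<in> \<tau>" "W \<in> \<rho>"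
      using V W by blast
    then show False
    proof cases
      case 1
      then show False by (rule noncrossingD[OF NC_on_noncrossing[OF \<rho>] _ _ \<open>V \<noteq> W\<close> abcd])
    next
      case 2
      then show False by (rule noncrossingD[OF NC_on_noncrossing[OF \<tau>] _ _ \<open>V \<noteq> W\<close> abcd])
    next
      case 3
      then show False using no_crossing[of V W a b c d] abcd by blast
    next
      case 4
      then show False using no_crossing[of W V a b c d] abcd by blast
    qed
  qed
  ultimately show ?thesis by (simp add: NC_on_def)
qed

lemma NC_on_Un_split:
  assumes "\<rho> \<in> NC_on X" "\<tau> \<in> NC_on Y" "X \<inter> Y = {}"
  shows "{V\<in>\<rho> \<union> \<tau>. V \<subseteq> X} = \<rho>" "{V\<in>\<rho> \<union> \<tau>. V \<subseteq> Y} = \<tau>"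
proof -
  have "V \<notin> \<tau>" if "V \<subseteq> X" for V
    using NC_on_block_subset[OF assms(2)] NC_on_block_nonempty[OF assms(2)] assms(3) that by fast
  moreover have "V \<notin> \<rho>" if "V \<subseteq> Y" for V
    using NC_on_block_subset[OF assms(1)] NC_on_block_nonempty[OF assms(1)] assms(3) that by fast
  ultimately show "{V\<in>\<rho> \<union> \<tau>. V \<subseteq> X} = \<rho>" "{V\<in>\<rho> \<union> \<tau>. V \<subseteq> Y} = \<tau>"
    using NC_on_block_subset[OF assms(1)] NC_on_block_subset[OF assms(2)] by blast+
qed

lemma colour_classes_block_split:
  assumes X: "X = {x\<in>U. f x = j}" and Y: "Y = {x\<in>U. f x \<in> J}"
    and \<pi>: "\<pi> \<in> NC_on (X \<union> Y)" "constant_on_blocks f \<pi>" and V: "V \<in> \<pi>"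
  shows "V \<subseteq> X \<or> V \<subseteq> Y"
proof -
  obtain x where x: "x \<in> V" using NC_on_block_nonempty[OF \<pi>(1) V] by blast
  have "V \<subseteq> X \<union> Y" by (rule NC_on_block_subset[OF \<pi>(1) V])
  then have x_colour: "f x = j \<or> f x \<in> J" and "V \<subseteq> U" using x unfolding X Y by auto
  moreover have "\<forall>y\<in>V. f y = f x" using \<pi>(2) V x unfolding constant_on_blocks_def by blast
  ultimately have "V \<subseteq> {y\<in>U. f y = f x}" by blast
  with x_colour show ?thesis unfolding X Y by auto
qed

text \<open>Gluing noncrossing partitions of two colour classes along a noncrossing colouring never
  creates a crossing: a crossing between blocks of different colours would force the colours
  to coincide.\<close>
lemma NC_on_Un_colour_classes:
  assumes col: "noncrossing_colouring U f" and "j \<notin> J"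
    and X: "X = {x\<in>U. f x = j}" and Y: "Y = {x\<in>U. f x \<in> J}"
    and \<rho>: "\<rho> \<in> NC_on X" and \<tau>: "\<tau> \<in> NC_on Y" "constant_on_blocks f \<tau>"
  shows "\<rho> \<union> \<tau> \<in> NC_on (X \<union> Y)"
proof (rule NC_on_Un[OF \<rho> \<tau>(1)])
  show "X \<inter> Y = {}" using \<open>j \<notin> J\<close> X Y by auto
  fix V W a b c d assume V: "V \<in> \<rho>" and W: "W \<in> \<tau>" and abcd: "a < b" "b < c" "c < d"
    and crossing: "(a \<in> V \<and> c \<in> V \<and> b \<in> W \<and> d \<in> W) \<or> (a \<in> W \<and> c \<in> W \<and> b \<in> V \<and> d \<in> V)"
  have V_colour: "x \<in> U" "f x = j" if "x \<in> V" for x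
    using NC_on_block_subset[OF \<rho> V] that unfolding X by auto
  have W_colour: "x \<in> U" "f x \<in> J" if "x \<in> W" for x
    using NC_on_block_subset[OF \<tau>(1) W] that unfolding Y by auto
  have W_const: "f x = f y" if "x \<in> W" "y \<in> W" for x y
    using \<tau>(2) W that unfolding constant_on_blocks_def by blast
  from crossing show False
  proof (elim disjE conjE)
    assume "a \<in> V" "c \<in> V" "b \<in> W" "d \<in> W"
    then have "f a = f b"
      by (intro noncrossing_colouringD[OF col _ _ _ _ abcd]) (auto simp: V_colour W_colour intro: W_const)
    moreover have "f a = j" "f b \<in> J" using \<open>a \<in> V\<close> \<open>b \<in> W\<close> V_colour W_colour by blast+
    ultimately show False using \<open>j \<notin> J\<close> by simp
  next
    assume "a \<in> W" "c \<in> W" "b \<in> V" "d \<in> V"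
    then have "f a = f b"
      by (intro noncrossing_colouringD[OF col _ _ _ _ abcd]) (auto simp: V_colour W_colour intro: W_const)
    moreover have "f a \<in> J" "f b = j" using \<open>a \<in> W\<close> \<open>b \<in> V\<close> V_colour W_colour by blast+
    ultimately show False using \<open>j \<notin> J\<close> by simp
  qed
qed

lemma NC_on_disjoint:
  assumes "\<rho> \<in> NC_on X" "\<tau> \<in> NC_on Y" "X \<inter> Y = {}"
  shows "\<rho> \<inter> \<tau> = {}"
proof -
  have "V = {}" if "V \<in> \<rho>" "V \<in> \<tau>" for V
    using NC_on_block_subset[OF assms(1) that(1)] NC_on_block_subset[OF assms(2) that(2)] assms(3) by auto
  then show ?thesis using NC_on_block_nonempty[OF assms(1)] by blast
qed

lemma NC_on_colour_classes_bij:
  assumes col: "noncrossing_colouring U f" and "j \<notin> J"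
    and X: "X = {x\<in>U. f x = j}" and Y: "Y = {x\<in>U. f x \<in> J}"
  shows "bij_betw (\<lambda>(\<rho>, \<tau>). \<rho> \<union> \<tau>) (NC_on X \<times> {\<tau>\<in>NC_on Y. constant_on_blocks f \<tau>})
           {\<pi>\<in>NC_on (X \<union> Y). constant_on_blocks f \<pi>}"
proof (rule bij_betw_byWitness[where f' = "\<lambda>\<pi>. ({V\<in>\<pi>. V \<subseteq> X}, {V\<in>\<pi>. V \<subseteq> Y})"])
  have XY: "X \<inter> Y = {}" using \<open>j \<notin> J\<close> X Y by auto
  show "\<forall>p\<in>NC_on X \<times> {\<tau>\<in>NC_on Y. constant_on_blocks f \<tau>}.
      (\<lambda>\<pi>. ({V\<in>\<pi>. V \<subseteq> X}, {V\<in>\<pi>. V \<subseteq> Y})) ((\<lambda>(\<rho>, \<tau>). \<rho> \<union> \<tau>) p) = p"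
    using NC_on_Un_split[OF _ _ XY] by clarsimp
  show "\<forall>\<pi>\<in>{\<pi>\<in>NC_on (X \<union> Y). constant_on_blocks f \<pi>}.
      (\<lambda>(\<rho>, \<tau>). \<rho> \<union> \<tau>) ((\<lambda>\<pi>. ({V\<in>\<pi>. V \<subseteq> X}, {V\<in>\<pi>. V \<subseteq> Y})) \<pi>) = \<pi>"
  proof clarify
    fix \<pi> assume "\<pi> \<in> NC_on (X \<union> Y)" "constant_on_blocks f \<pi>"
    then have "\<forall>V\<in>\<pi>. V \<subseteq> X \<or> V \<subseteq> Y" using colour_classes_block_split[OF X Y] by blast
    then show "{V\<in>\<pi>. V \<subseteq> X} \<union> {V\<in>\<pi>. V \<subseteq> Y} = \<pi>" by blast
  qed
  have "({V\<in>\<pi>. V \<subseteq> X}, {V\<in>\<pi>. V \<subseteq> Y}) \<in> NC_on X \<times> {\<tau>\<in>NC_on Y. constant_on_blocks f \<tau>}"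
    if \<pi>: "\<pi> \<in> NC_on (X \<union> Y)" "constant_on_blocks f \<pi>" for \<pi>
  proof -
    have "V \<subseteq> X \<or> V \<inter> X = {}" "V \<subseteq> Y \<or> V \<inter> Y = {}" if "V \<in> \<pi>" for V
      using colour_classes_block_split[OF X Y \<pi> that] XY by auto
    then have "{V\<in>\<pi>. V \<subseteq> X} \<in> NC_on X" "{V\<in>\<pi>. V \<subseteq> Y} \<in> NC_on Y"
      using NC_on_restrict[OF \<pi>(1)] by auto
    moreover have "constant_on_blocks f {V\<in>\<pi>. V \<subseteq> Y}"
      using \<pi>(2) unfolding constant_on_blocks_def by blast
    ultimately show ?thesis by simp
  qed
  then show "(\<lambda>\<pi>. ({V\<in>\<pi>. V \<subseteq> X}, {V\<in>\<pi>. V \<subseteq> Y})) ` {\<pi>\<in>NC_on (X \<union> Y). constant_on_blocks f \<pi>}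
      \<subseteq> NC_on X \<times> {\<tau>\<in>NC_on Y. constant_on_blocks f \<tau>}"
    by blast
  have "\<rho> \<union> \<tau> \<in> {\<pi>\<in>NC_on (X \<union> Y). constant_on_blocks f \<pi>}"
    if \<rho>: "\<rho> \<in> NC_on X" and \<tau>: "\<tau> \<in> NC_on Y" "constant_on_blocks f \<tau>" for \<rho> \<tau>
  proof -
    have "f x = j" if "V \<in> \<rho>" "x \<in> V" for V x
      using NC_on_block_subset[OF \<rho> that(1)] that(2) unfolding X by auto
    then have "constant_on_blocks f (\<rho> \<union> \<tau>)"
      using \<tau>(2) unfolding constant_on_blocks_def by (metis UnE)
    with NC_on_Un_colour_classes[OF col \<open>j \<notin> J\<close> X Y \<rho> \<tau>] show ?thesis by simp
  qed
  then show "(\<lambda>(\<rho>, \<tau>). \<rho> \<union> \<tau>) ` (NC_on X \<times> {\<tau>\<in>NC_on Y. constant_on_blocks f \<tau>})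
      \<subseteq> {\<pi>\<in>NC_on (X \<union> Y). constant_on_blocks f \<pi>}"
    by auto
qed

lemma prod_sum_NC_on_colour_classes:
  assumes "finite U" "noncrossing_colouring U f" "finite J"
  shows "(\<Prod>j\<in>J. \<Sum>\<rho>\<in>NC_on {x\<in>U. f x = j}. kappa_pi \<kappa> \<rho> a) =
         (\<Sum>\<pi>\<in>{\<pi>\<in>NC_on {x\<in>U. f x \<in> J}. constant_on_blocks f \<pi>}. kappa_pi \<kappa> \<pi> a)"
  using assms(3)
proof (induction J rule: finite_induct)
  case empty
  have "{\<pi>\<in>NC_on {x\<in>U. f x \<in> {}}. constant_on_blocks f \<pi>} = {{}}"
    by (auto simp: constant_on_blocks_def)
  then show ?case by (simp add: kappa_pi_def)
next
  case (insert j J)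
  define X where "X = {x\<in>U. f x = j}"
  define Y where "Y = {x\<in>U. f x \<in> J}"
  let ?T = "{\<tau>\<in>NC_on Y. constant_on_blocks f \<tau>}"
  have XY: "X \<inter> Y = {}" using insert(2) by (auto simp: X_def Y_def)
  have fin: "finite X" "finite Y" using assms(1) by (simp_all add: X_def Y_def)
  have "(\<Prod>j\<in>insert j J. \<Sum>\<rho>\<in>NC_on {x\<in>U. f x = j}. kappa_pi \<kappa> \<rho> a) =
      (\<Sum>\<rho>\<in>NC_on X. kappa_pi \<kappa> \<rho> a) * (\<Sum>\<tau>\<in>?T. kappa_pi \<kappa> \<tau> a)"
    using insert by (simp add: X_def Y_def)
  also have "\<dots> = (\<Sum>p\<in>NC_on X \<times> ?T. kappa_pi \<kappa> ((\<lambda>(\<rho>, \<tau>). \<rho> \<union> \<tau>) p) a)"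
    unfolding sum_product sum.cartesian_product
    by (intro sum.cong refl, clarify, rule kappa_pi_Un[symmetric])
       (simp_all add: NC_on_finite_blocks[OF fin(1)] NC_on_finite_blocks[OF fin(2)] NC_on_disjoint[OF _ _ XY])
  also have "\<dots> = (\<Sum>\<pi>\<in>{\<pi>\<in>NC_on (X \<union> Y). constant_on_blocks f \<pi>}. kappa_pi \<kappa> \<pi> a)"
    by (rule sum.reindex_bij_betw[OF NC_on_colour_classes_bij[OF assms(2) insert(2) X_def Y_def]])
  also have "X \<union> Y = {x\<in>U. f x \<in> insert j J}" by (auto simp: X_def Y_def)
  finally show ?case .
qed

section \<open>Cyclic labels and arcs\<close>

lemma count_below_add:
  assumes "finite S" "x \<le> y"
  shows "count_below S y = count_below S x + card {s\<in>S. x \<le> s \<and> s < y}"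
proof -
  have "{s\<in>S. s < y} = {s\<in>S. s < x} \<union> {s\<in>S. x \<le> s \<and> s < y}" using assms(2) by auto
  then show ?thesis
    unfolding count_below_def using assms(1) by (simp add: card_Un_disjoint disjoint_iff)
qed

lemma mod_eq_iff_le_bound:
  fixes i j k :: nat
  assumes "i \<le> j" "j \<le> k"
  shows "i mod k = j mod k \<longleftrightarrow> i = j \<or> i = 0 \<and> j = k"
  using assms by (cases "j = k") (auto simp: le_less)

lemma cyclic_label_eq_iff:
  assumes "finite S" "x \<le> y"
  shows "cyclic_label S x = cyclic_label S y \<longleftrightarrow>
    (\<forall>s\<in>S. s < x \<or> y \<le> s) \<or> (\<forall>s\<in>S. x \<le> s \<and> s < y)"
proof -
  have "cyclic_label S x = cyclic_label S y \<longleftrightarrow>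
      count_below S x = count_below S y \<or> count_below S x = 0 \<and> count_below S y = card S"
    unfolding cyclic_label_def using assms
    by (intro mod_eq_iff_le_bound count_below_mono count_below_le_card)
  also have "count_below S x = count_below S y \<longleftrightarrow> (\<forall>s\<in>S. s < x \<or> y \<le> s)"
    using assms by (auto simp: count_below_add) (meson not_le)
  also have "count_below S x = 0 \<longleftrightarrow> (\<forall>s\<in>S. x \<le> s)"
    using assms(1) by (auto simp: count_below_def)
  also have "count_below S y = card S \<longleftrightarrow> (\<forall>s\<in>S. s < y)"
    using assms(1) unfolding count_below_def
    by (metis (no_types, lifting) card_subset_eq mem_Collect_eq subsetI Collect_mem_eq Collect_cong)
  finally show ?thesis by auto
qed

lemma noncrossing_colouring_cyclic_label:
  assumes "finite S"
  shows "noncrossing_colouring U (cyclic_label S)"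
  unfolding noncrossing_colouring_def
proof (intro ballI impI)
  fix x y z w assume "x < y" "y < z" "z < w"
    and "cyclic_label S x = cyclic_label S z" "cyclic_label S y = cyclic_label S w"
  then have xz: "(\<forall>s\<in>S. s < x \<or> z \<le> s) \<or> (\<forall>s\<in>S. x \<le> s \<and> s < z)"
    and yw: "(\<forall>s\<in>S. s < y \<or> w \<le> s) \<or> (\<forall>s\<in>S. y \<le> s \<and> s < w)"
    using assms by (simp_all add: cyclic_label_eq_iff)
  have "(\<forall>s\<in>S. s < x \<or> y \<le> s) \<or> (\<forall>s\<in>S. x \<le> s \<and> s < y)"
  proof (cases "\<forall>s\<in>S. s < x \<or> z \<le> s")
    case True
    then show ?thesis using \<open>y < z\<close> by force
  next
    case False
    then have "\<forall>s\<in>S. x \<le> s \<and> s < z" using xz by blast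
    then show ?thesis using yw \<open>z < w\<close> by force
  qed
  then show "cyclic_label S x = cyclic_label S y"
    using assms \<open>x < y\<close> by (simp add: cyclic_label_eq_iff)
qed

text \<open>For \<open>S = {s, t} \<union> T\<close> with \<open>s < T < t\<close> the labels cut \<open>{1..n}\<close> into the arc \<open>(s, t]\<close>,
  itself cut after every point of \<open>T\<close>, and the complement of the arc.\<close>
lemma cyclic_label_arc_eq_iff:
  assumes "s < t" "T \<subseteq> {s<..<t}" "x \<le> y"
  shows "cyclic_label (insert s (insert t T)) x = cyclic_label (insert s (insert t T)) y \<longleftrightarrow>
     (s < x \<and> x \<le> t \<longleftrightarrow> s < y \<and> y \<le> t) \<and> (s < x \<and> y \<le> t \<longrightarrow> (\<forall>u\<in>T. u < x \<or> y \<le> u))"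
proof -
  have "finite T" using assms(2) finite_subset by blast
  then have "cyclic_label (insert s (insert t T)) x = cyclic_label (insert s (insert t T)) y \<longleftrightarrow>
     ((s < x \<or> y \<le> s) \<and> (t < x \<or> y \<le> t) \<and> (\<forall>u\<in>T. u < x \<or> y \<le> u)) \<or>
     ((x \<le> s \<and> s < y) \<and> (x \<le> t \<and> t < y) \<and> (\<forall>u\<in>T. x \<le> u \<and> u < y))"
    using assms(3) by (simp add: cyclic_label_eq_iff)
  also have "\<dots> \<longleftrightarrow>
     (s < x \<and> x \<le> t \<longleftrightarrow> s < y \<and> y \<le> t) \<and> (s < x \<and> y \<le> t \<longrightarrow> (\<forall>u\<in>T. u < x \<or> y \<le> u))"
  proof -
    have T: "\<forall>u\<in>T. s < u \<and> u < t" using assms(2) by auto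
    consider "s < x" "y \<le> t" | "s < x" "x \<le> t" "t < y" | "x \<le> s" "s < y" "y \<le> t"
      | "y \<le> s" | "t < x" | "x \<le> s" "t < y"
      using assms(3) by linarith
    then show ?thesis
    proof cases
      case 4
      then have "\<forall>u\<in>T. u < x \<or> y \<le> u" using T by force
      then show ?thesis using 4 assms(1,3) by auto
    next
      case 5
      then have "\<forall>u\<in>T. u < x \<or> y \<le> u" using T by force
      then show ?thesis using 5 assms(1,3) by auto
    next
      case 6
      then have "\<forall>u\<in>T. x \<le> u \<and> u < y" using T by force
      then show ?thesis using 6 assms(1) by auto
    qed (use assms(1,3) in auto)
  qed
  finally show ?thesis .
qed

definition arc_closed :: "nat set set \<Rightarrow> nat \<Rightarrow> nat \<Rightarrow> bool" where
  "arc_closed \<pi> s t \<longleftrightarrow> (\<forall>V\<in>\<pi>. \<forall>x\<in>V. \<forall>y\<in>V. (s < x \<and> x \<le> t) = (s < y \<and> y \<le> t))"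

text \<open>The points \<open>c\<close> of the arc \<open>(s, t)\<close> after which the arc can be cut without cutting a block.\<close>
definition free_cuts :: "nat set set \<Rightarrow> nat \<Rightarrow> nat \<Rightarrow> nat set" where
  "free_cuts \<pi> s t =
     {c. s < c \<and> c < t \<and> \<not> (\<exists>V\<in>\<pi>. \<exists>x\<in>V. \<exists>y\<in>V. s < x \<and> y \<le> t \<and> x \<le> c \<and> c < y)}"

lemma arc_closed_iff_ordered:
  "arc_closed \<pi> s t \<longleftrightarrow> (\<forall>V\<in>\<pi>. \<forall>x\<in>V. \<forall>y\<in>V. x \<le> y \<longrightarrow> (s < x \<and> x \<le> t \<longleftrightarrow> s < y \<and> y \<le> t))"
  unfolding arc_closed_def
proof (rule iffI; intro ballI)
  fix V x y assume H: "\<forall>V\<in>\<pi>. \<forall>x\<in>V. \<forall>y\<in>V. x \<le> y \<longrightarrow> (s < x \<and> x \<le> t \<longleftrightarrow> s < y \<and> y \<le> t)"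
    and "V \<in> \<pi>" "x \<in> V" "y \<in> V"
  show "s < x \<and> x \<le> t \<longleftrightarrow> s < y \<and> y \<le> t"
  proof (cases x y rule: le_cases)
    case le
    then show ?thesis by (rule H[rule_format, OF \<open>V \<in> \<pi>\<close> \<open>x \<in> V\<close> \<open>y \<in> V\<close>])
  next
    case ge
    then show ?thesis by (rule H[rule_format, OF \<open>V \<in> \<pi>\<close> \<open>y \<in> V\<close> \<open>x \<in> V\<close>, symmetric])
  qed
qed blast

lemma subset_free_cuts_iff:
  assumes T: "T \<subseteq> {s<..<t}"
  shows "T \<subseteq> free_cuts \<pi> s t \<longleftrightarrow>
    (\<forall>V\<in>\<pi>. \<forall>x\<in>V. \<forall>y\<in>V. x \<le> y \<longrightarrow> s < x \<and> y \<le> t \<longrightarrow> (\<forall>u\<in>T. u < x \<or> y \<le> u))"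
proof
  assume H: "T \<subseteq> free_cuts \<pi> s t"
  show "\<forall>V\<in>\<pi>. \<forall>x\<in>V. \<forall>y\<in>V. x \<le> y \<longrightarrow> s < x \<and> y \<le> t \<longrightarrow> (\<forall>u\<in>T. u < x \<or> y \<le> u)"
  proof (intro ballI impI)
    fix V x y u assume "V \<in> \<pi>" "x \<in> V" "y \<in> V" "s < x \<and> y \<le> t" "u \<in> T"
    with H have "\<not> (x \<le> u \<and> u < y)" unfolding free_cuts_def by blast
    then show "u < x \<or> y \<le> u" by auto
  qed
next
  assume H: "\<forall>V\<in>\<pi>. \<forall>x\<in>V. \<forall>y\<in>V. x \<le> y \<longrightarrow> s < x \<and> y \<le> t \<longrightarrow> (\<forall>u\<in>T. u < x \<or> y \<le> u)"
  show "T \<subseteq> free_cuts \<pi> s t"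
  proof
    fix c assume c: "c \<in> T"
    have no_block: "\<not> (s < x \<and> y \<le> t \<and> x \<le> c \<and> c < y)" if "V \<in> \<pi>" "x \<in> V" "y \<in> V" for V x y
    proof
      assume h: "s < x \<and> y \<le> t \<and> x \<le> c \<and> c < y"
      then have "x \<le> y" by simp
      then have "c < x \<or> y \<le> c" using H[rule_format, OF that] h c by blast
      with h show False by simp
    qed
    have "s < c" "c < t" using c T by auto
    with no_block show "c \<in> free_cuts \<pi> s t" unfolding free_cuts_def by blast
  qed
qed

lemma constant_on_blocks_cyclic_label_arc_iff:
  assumes st: "s < t" and T: "T \<subseteq> {s<..<t}"
  shows "constant_on_blocks (cyclic_label (insert s (insert t T))) \<pi> \<longleftrightarrow>
    arc_closed \<pi> s t \<and> T \<subseteq> free_cuts \<pi> s t"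
proof -
  let ?B = "cyclic_label (insert s (insert t T))"
  have "constant_on_blocks ?B \<pi> \<longleftrightarrow> (\<forall>V\<in>\<pi>. \<forall>x\<in>V. \<forall>y\<in>V. x \<le> y \<longrightarrow> ?B x = ?B y)"
    unfolding constant_on_blocks_def by (metis nle_le)
  also have "\<dots> \<longleftrightarrow> (\<forall>V\<in>\<pi>. \<forall>x\<in>V. \<forall>y\<in>V. x \<le> y \<longrightarrow> (s < x \<and> x \<le> t \<longleftrightarrow> s < y \<and> y \<le> t)) \<and>
      (\<forall>V\<in>\<pi>. \<forall>x\<in>V. \<forall>y\<in>V. x \<le> y \<longrightarrow> s < x \<and> y \<le> t \<longrightarrow> (\<forall>u\<in>T. u < x \<or> y \<le> u))"
    by (simp add: cyclic_label_arc_eq_iff[OF st T] imp_conjR ball_conj_distrib cong: imp_cong)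
  also have "\<dots> \<longleftrightarrow> arc_closed \<pi> s t \<and> T \<subseteq> free_cuts \<pi> s t"
    by (simp only: arc_closed_iff_ordered subset_free_cuts_iff[OF T])
  finally show ?thesis .
qed

lemma NC_on_interval_block:
  assumes "\<pi> \<in> NC_on {1..n}" "V \<in> \<pi>"
  shows "finite V" "Min V \<in> V" "Max V \<in> V" "1 \<le> Min V" "Max V \<le> n"
    "\<And>v. v \<in> V \<Longrightarrow> Min V \<le> v \<and> v \<le> Max V"
proof -
  have sub: "V \<subseteq> {1..n}" and "V \<noteq> {}"
    using NC_on_block_subset[OF assms] NC_on_block_nonempty[OF assms] by auto
  then show fin: "finite V" using finite_subset by blast
  show "Min V \<in> V" "Max V \<in> V" using fin \<open>V \<noteq> {}\<close> by simp_all
  then show "1 \<le> Min V" "Max V \<le> n" using sub by auto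
  show "\<And>v. v \<in> V \<Longrightarrow> Min V \<le> v \<and> v \<le> Max V" using fin by simp
qed

text \<open>No block crosses \<open>V\<close>, so every block lies inside or outside the hull of \<open>V\<close>.\<close>
lemma arc_closed_block:
  assumes \<pi>: "\<pi> \<in> NC_on {1..n}" and V: "V \<in> \<pi>"
  shows "arc_closed \<pi> (Min V - 1) (Max V)"
proof -
  note V_bounds = NC_on_interval_block[OF \<pi> V]
  note N = NC_on_noncrossing[OF \<pi>]
  define s where "s = Min V - 1"
  have Min: "Min V = Suc s" using V_bounds(4) by (simp add: s_def)
  have in_arc: "s < v \<and> v \<le> Max V" if "v \<in> V" for v using V_bounds(6)[OF that] Min by simp
  have False
    if W: "W \<in> \<pi>" "u \<in> W" "s < u" "u \<le> Max V" "w \<in> W" "\<not> (s < w \<and> w \<le> Max V)" for W u w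
  proof -
    have "W \<noteq> V" using W(5,6) in_arc by blast
    then have "u \<notin> V" using NC_on_block_unique[OF \<pi> V W(1) _ W(2)] by blast
    then have "u \<noteq> Min V" "u \<noteq> Max V" using V_bounds(2,3) by auto
    then have u: "Min V < u" "u < Max V" using W(3,4) Min by auto
    show False
    proof (cases "w \<le> s")
      case True
      then have "w < Min V" using Min by simp
      then show False using noncrossingD[OF N W(1) V \<open>W \<noteq> V\<close> _ u] W(2,5) V_bounds(2,3) by blast
    next
      case False
      then have "Max V < w" using W(6) by simp
      then show False
        using noncrossingD[OF N V W(1) \<open>W \<noteq> V\<close>[symmetric] u] W(2,5) V_bounds(2,3) by blast
    qed
  qed
  then show ?thesis unfolding arc_closed_def s_def[symmetric] by blast
qed

lemma arc_of_block:
  assumes \<pi>: "\<pi> \<in> NC_on {1..n}" and V: "V \<in> \<pi>"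
  shows "Min V - 1 < Max V" "Max V \<le> n" "arc_closed \<pi> (Min V - 1) (Max V)"
    "free_cuts \<pi> (Min V - 1) (Max V) = {}"
proof -
  note V_bounds = NC_on_interval_block[OF \<pi> V]
  show "Min V - 1 < Max V" "Max V \<le> n" using V_bounds(4,5) V_bounds(6)[OF V_bounds(3)] by auto
  show "arc_closed \<pi> (Min V - 1) (Max V)" by (rule arc_closed_block[OF \<pi> V])
  have "c \<notin> free_cuts \<pi> (Min V - 1) (Max V)" for c
  proof
    assume "c \<in> free_cuts \<pi> (Min V - 1) (Max V)"
    then have "Min V - 1 < c" "c < Max V"
      and "\<not> (\<exists>x\<in>V. \<exists>y\<in>V. Min V - 1 < x \<and> y \<le> Max V \<and> x \<le> c \<and> c < y)"
      using V unfolding free_cuts_def by auto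
    then show False using V_bounds(2,3,4) by auto
  qed
  then show "free_cuts \<pi> (Min V - 1) (Max V) = {}" by blast
qed

text \<open>Conversely, the block of \<open>s + 1\<close> stays inside a closed arc \<open>(s, t]\<close>; if it ended
  before \<open>t\<close>, its maximum would be a free cut.\<close>
lemma block_of_arc:
  assumes \<pi>: "\<pi> \<in> NC_on {1..n}" and "s < t" "t \<le> n"
    and closed: "arc_closed \<pi> s t" and no_cuts: "free_cuts \<pi> s t = {}"
  obtains V where "V \<in> \<pi>" "Min V = Suc s" "Max V = t"
proof -
  have "Suc s \<in> {1..n}" using assms(2,3) by auto
  then obtain V where V: "V \<in> \<pi>" and sV: "Suc s \<in> V" using NC_on_covers[OF \<pi>] by blast
  note V_bounds = NC_on_interval_block[OF \<pi> V]
  have in_arc: "s < v \<and> v \<le> t" if "v \<in> V" for v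
    using closed V sV that assms(2) unfolding arc_closed_def by force
  have Min: "Min V = Suc s"
    using V_bounds(6)[OF sV] in_arc[OF V_bounds(2)] by simp
  have "Max V = t"
  proof (rule ccontr)
    assume "Max V \<noteq> t"
    then have "Max V < t" using in_arc[OF V_bounds(3)] by simp
    moreover have "s < Max V" using in_arc[OF V_bounds(3)] by simp
    moreover have False if W: "W \<in> \<pi>" "x \<in> W" "y \<in> W" "s < x" "x \<le> Max V" "Max V < y" for W x y
    proof -
      have "W \<noteq> V" using W(3,6) V_bounds(6) by fastforce
      then have "x \<notin> V" using NC_on_block_unique[OF \<pi> V W(1) _ W(2)] by blast
      then have "x \<noteq> Suc s" "x \<noteq> Max V" using sV V_bounds(3) by auto
      then have "Suc s < x" "x < Max V" using W(4,5) by auto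
      then show False
        using noncrossingD[OF NC_on_noncrossing[OF \<pi>] V W(1) \<open>W \<noteq> V\<close>[symmetric] _ _ W(6)]
          sV V_bounds(3) W(2,3) by blast
    qed
    ultimately have "Max V \<in> free_cuts \<pi> s t" unfolding free_cuts_def by auto
    then show False using no_cuts by simp
  qed
  then show ?thesis using that V Min by blast
qed

lemma closed_arcs_eq_blocks:
  assumes "\<pi> \<in> NC_on {1..n}"
  shows "{(s, t). s < t \<and> t \<le> n \<and> arc_closed \<pi> s t \<and> free_cuts \<pi> s t = {}} = (\<lambda>V. (Min V - 1, Max V)) ` \<pi>"
proof
  show "(\<lambda>V. (Min V - 1, Max V)) ` \<pi> \<subseteq> {(s, t). s < t \<and> t \<le> n \<and> arc_closed \<pi> s t \<and> free_cuts \<pi> s t = {}}"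
    using arc_of_block[OF assms] by blast
  show "{(s, t). s < t \<and> t \<le> n \<and> arc_closed \<pi> s t \<and> free_cuts \<pi> s t = {}} \<subseteq> (\<lambda>V. (Min V - 1, Max V)) ` \<pi>"
  proof clarify
    fix s t assume "s < t" "t \<le> n" "arc_closed \<pi> s t" "free_cuts \<pi> s t = {}"
    then obtain V where "V \<in> \<pi>" "Min V = Suc s" "Max V = t" by (rule block_of_arc[OF assms])
    then show "(s, t) \<in> (\<lambda>V. (Min V - 1, Max V)) ` \<pi>" by force
  qed
qed

lemma inj_on_block_arc:
  assumes "\<pi> \<in> NC_on {1..n}"
  shows "inj_on (\<lambda>V. (Min V - 1, Max V)) \<pi>"
proof (rule inj_onI)
  fix V W assume V: "V \<in> \<pi>" and W: "W \<in> \<pi>" and "(Min V - 1, Max V) = (Min W - 1, Max W)"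
  moreover have "1 \<le> Min V" "1 \<le> Min W" using NC_on_interval_block(4)[OF assms] V W by blast+
  ultimately have "Min V = Min W" by (simp, arith)
  then show "V = W"
    using NC_on_block_unique[OF assms V W] NC_on_interval_block(2)[OF assms] V W by metis
qed

section \<open>The alternating sum over compatible position sets\<close>

lemma sum_minus_one_power_Pow:
  assumes "finite C"
  shows "(\<Sum>T\<in>Pow C. (- 1 :: 'a::comm_ring_1) ^ card T) = (if C = {} then 1 else 0)"
proof -
  have "(\<Prod>x\<in>C. 1 - 1) = (\<Sum>T\<in>Pow C. (- 1 :: 'a) ^ card T)"
    using prod_diff_conv_sum[OF assms, of "\<lambda>_. 1" "\<lambda>_. 1"] by simp
  then show ?thesis using assms by (simp add: power_0_left)
qed

lemma Min_Max_decomposition: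
  fixes S :: "'a::linorder set"
  assumes "finite S" "2 \<le> card S"
  shows "Min S < Max S" "S - {Min S, Max S} \<subseteq> {Min S<..<Max S}"
    "insert (Min S) (insert (Max S) (S - {Min S, Max S})) = S"
proof -
  have "S \<noteq> {}" using assms(2) by auto
  then have "Min S \<in> S" "Max S \<in> S" using assms(1) by simp_all
  moreover have "Min S \<noteq> Max S"
  proof
    assume eq: "Min S = Max S"
    have "S \<subseteq> {Min S}"
    proof
      fix x assume "x \<in> S"
      then have "Min S \<le> x" "x \<le> Max S" using assms(1) by simp_all
      with eq show "x \<in> {Min S}" by simp
    qed
    then show False using assms(2) card_mono[of "{Min S}" S] by simp
  qed
  ultimately show "Min S < Max S" "insert (Min S) (insert (Max S) (S - {Min S, Max S})) = S"
    using Min_le[OF assms(1)] by (auto simp: order.order_iff_strict)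
  show "S - {Min S, Max S} \<subseteq> {Min S<..<Max S}"
  proof
    fix x assume "x \<in> S - {Min S, Max S}"
    with assms(1) have "Min S \<le> x" "x \<le> Max S" "x \<noteq> Min S" "x \<noteq> Max S" by auto
    then show "x \<in> {Min S<..<Max S}" by auto
  qed
qed

lemma insert_extremes:
  fixes s t :: nat
  assumes "s < t" "T \<subseteq> {s<..<t}"
  shows "Min (insert s (insert t T)) = s" "Max (insert s (insert t T)) = t"
    "insert s (insert t T) - {s, t} = T" "card (insert s (insert t T)) = card T + 2"
proof -
  have "finite T" using assms(2) finite_subset by blast
  show "Min (insert s (insert t T)) = s" using assms \<open>finite T\<close> by (intro Min_eqI) auto
  show "Max (insert s (insert t T)) = t" using assms \<open>finite T\<close> by (intro Max_eqI) auto
  have "s \<notin> insert t T" "t \<notin> T" using assms by auto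
  then show "insert s (insert t T) - {s, t} = T" "card (insert s (insert t T)) = card T + 2"
    using \<open>finite T\<close> by auto
qed

lemma bij_betw_insert_extremes:
  fixes n :: nat
  shows "bij_betw (\<lambda>((s, t), T). insert s (insert t T)) (SIGMA (s, t):{(s, t). s < t \<and> t \<le> n}. Pow {s<..<t})
     {S\<in>Pow {0..n}. 2 \<le> card S}"
proof (rule bij_betw_byWitness[where f' = "\<lambda>S. ((Min S, Max S), S - {Min S, Max S})"])
  show "\<forall>p\<in>SIGMA (s, t):{(s, t). s < t \<and> t \<le> n}. Pow {s<..<t}.
      (\<lambda>S. ((Min S, Max S), S - {Min S, Max S})) ((\<lambda>((s, t), T). insert s (insert t T)) p) = p"
    using insert_extremes by auto
  show "(\<lambda>((s, t), T). insert s (insert t T)) ` (SIGMA (s, t):{(s, t). s < t \<and> t \<le> n}. Pow {s<..<t})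
      \<subseteq> {S\<in>Pow {0..n}. 2 \<le> card S}"
    using insert_extremes(4) by auto
  have S: "finite S" "2 \<le> card S" "Max S \<le> n" if "S \<in> {S\<in>Pow {0..n}. 2 \<le> card S}" for S
  proof -
    from that have "S \<subseteq> {0..n}" "2 \<le> card S" by simp_all
    moreover from this have "finite S" "S \<noteq> {}" using finite_subset[of S "{0..n}"] by auto
    ultimately show "finite S" "2 \<le> card S" "Max S \<le> n" by auto
  qed
  show "\<forall>S\<in>{S\<in>Pow {0..n}. 2 \<le> card S}.
      (\<lambda>((s, t), T). insert s (insert t T)) ((\<lambda>S. ((Min S, Max S), S - {Min S, Max S})) S) = S"
    using Min_Max_decomposition(3)[OF S(1,2)] by simp
  show "(\<lambda>S. ((Min S, Max S), S - {Min S, Max S})) ` {S\<in>Pow {0..n}. 2 \<le> card S}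
      \<subseteq> (SIGMA (s, t):{(s, t). s < t \<and> t \<le> n}. Pow {s<..<t})"
    using Min_Max_decomposition(1,2)[OF S(1,2)] S(3) by auto
qed

lemma Pow_minus_empty_split:
  "Pow A - {{}} = (\<lambda>x. {x}) ` A \<union> {S\<in>Pow A. 2 \<le> card S}" if "finite A"
proof -
  have "S \<in> (\<lambda>x. {x}) ` A" if "S \<subseteq> A" "S \<noteq> {}" "card S < 2" for S
  proof -
    have "card S = 1"
      using that finite_subset[OF that(1) \<open>finite A\<close>] by (simp add: card_gt_0_iff less_2_cases_iff)
    then obtain x where "S = {x}" by (auto simp: card_1_singleton_iff)
    then show ?thesis using that(1) by auto
  qed
  then show ?thesis by (auto simp: not_le) (metis empty_iff not_le)
qed

lemma constant_on_blocks_cyclic_label_singleton: "constant_on_blocks (cyclic_label {x}) \<pi>"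
  by (simp add: constant_on_blocks_def cyclic_label_def)

text \<open>Summing over the interior points \<open>T\<close> of \<open>S = {s, t} \<union> T\<close> with fixed extremes \<open>s < t\<close>:
  the admissible \<open>T\<close> are the subsets of the free cuts, so the signs cancel unless there are none.\<close>
lemma sum_signs_fixed_extremes:
  assumes "s < t"
  shows "(\<Sum>T\<in>Pow {s<..<t}. if constant_on_blocks (cyclic_label (insert s (insert t T))) \<pi>
            then (- 1 :: int) ^ card (insert s (insert t T)) else 0) =
         (if arc_closed \<pi> s t \<and> free_cuts \<pi> s t = {} then 1 else 0)"
proof -
  let ?C = "free_cuts \<pi> s t"
  have C: "?C \<subseteq> {s<..<t}" "finite ?C"
    using finite_subset[of ?C "{s<..<t}"] by (auto simp: free_cuts_def)
  have "(\<Sum>T\<in>Pow {s<..<t}. if constant_on_blocks (cyclic_label (insert s (insert t T))) \<pi>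
            then (- 1 :: int) ^ card (insert s (insert t T)) else 0) =
        (\<Sum>T\<in>Pow {s<..<t}. if arc_closed \<pi> s t \<and> T \<subseteq> ?C then (- 1) ^ card T else 0)"
    by (intro sum.cong refl) (simp add: constant_on_blocks_cyclic_label_arc_iff[OF assms] insert_extremes(4)[OF assms])
  also have "\<dots> = (if arc_closed \<pi> s t then \<Sum>T\<in>Pow ?C. (- 1) ^ card T else 0)"
  proof -
    have "{T \<in> Pow {s<..<t}. T \<subseteq> ?C} = Pow ?C" using C(1) by auto
    then show ?thesis by (simp add: sum.inter_filter[symmetric])
  qed
  also have "\<dots> = (if arc_closed \<pi> s t \<and> ?C = {} then 1 else 0)"
    by (simp add: sum_minus_one_power_Pow[OF C(2)])
  finally show ?thesis .
qed

text \<open>Singletons contribute \<open>-1\<close> each, and each block of \<open>\<pi>\<close> contributes \<open>+1\<close>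
  through its arc.\<close>
lemma sum_signs_constant_on_blocks:
  fixes n :: nat
  assumes \<pi>: "\<pi> \<in> NC_on {1..n}"
  shows "(\<Sum>S\<in>Pow {0..n} - {{}}. if constant_on_blocks (cyclic_label S) \<pi> then (- 1 :: int) ^ card S else 0)
         = int (card \<pi>) - int (n + 1)"
proof -
  define F where "F S = (if constant_on_blocks (cyclic_label S) \<pi> then (- 1 :: int) ^ card S else 0)"
    for S
  let ?P = "{(s, t). s < t \<and> t \<le> n}"
  have "sum F ((\<lambda>x. {x}) ` {0..n}) = (\<Sum>x\<in>{0..n}. F {x})"
    by (simp add: sum.reindex)
  also have "\<dots> = - int (n + 1)"
    by (simp add: F_def constant_on_blocks_cyclic_label_singleton)
  finally have singletons: "sum F ((\<lambda>x. {x}) ` {0..n}) = - int (n + 1)" .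
  have finite_P: "finite ?P"
    by (rule finite_subset[of _ "{0..n} \<times> {0..n}"]) auto
  have "sum F {S\<in>Pow {0..n}. 2 \<le> card S} =
      (\<Sum>p\<in>(SIGMA (s, t):?P. Pow {s<..<t}). F ((\<lambda>((s, t), T). insert s (insert t T)) p))"
    by (rule sum.reindex_bij_betw[OF bij_betw_insert_extremes, symmetric])
  also have "\<dots> = (\<Sum>p\<in>?P. \<Sum>T\<in>Pow {fst p<..<snd p}. F (insert (fst p) (insert (snd p) T)))"
    using finite_P by (subst sum.Sigma) (auto simp: case_prod_beta')
  also have "\<dots> = (\<Sum>p\<in>?P. if arc_closed \<pi> (fst p) (snd p) \<and> free_cuts \<pi> (fst p) (snd p) = {} then 1 else 0)"
    unfolding F_def by (intro sum.cong refl sum_signs_fixed_extremes) auto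
  also have "\<dots> = int (card {p\<in>?P. arc_closed \<pi> (fst p) (snd p) \<and> free_cuts \<pi> (fst p) (snd p) = {}})"
    using finite_P by (simp add: sum.inter_filter[symmetric])
  also have "{p\<in>?P. arc_closed \<pi> (fst p) (snd p) \<and> free_cuts \<pi> (fst p) (snd p) = {}} =
      {(s, t). s < t \<and> t \<le> n \<and> arc_closed \<pi> s t \<and> free_cuts \<pi> s t = {}}"
    by auto
  also have "card \<dots> = card \<pi>"
    unfolding closed_arcs_eq_blocks[OF \<pi>] by (rule card_image[OF inj_on_block_arc[OF \<pi>]])
  finally have pairs: "sum F {S\<in>Pow {0..n}. 2 \<le> card S} = int (card \<pi>)" .
  have "sum F (Pow {0..n} - {{}}) = sum F ((\<lambda>x. {x}) ` {0..n}) + sum F {S\<in>Pow {0..n}. 2 \<le> card S}"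
    unfolding Pow_minus_empty_split[OF finite_atLeastAtMost] by (rule sum.union_disjoint) auto
  also have "\<dots> = int (card \<pi>) - int (n + 1)" using singletons pairs by simp
  finally show ?thesis by (simp only: F_def[abs_def])
qed

section \<open>The cumulant expansion of \<open>\<phi>'(p a\<^sub>1 p \<cdots> a\<^sub>n p)\<close>\<close>

context bimodule_extension
begin

lemma Phi_q_word_cumulants:
  assumes "cyclic_antimonotone_indep L R \<phi> \<Phi> q" "\<Phi> q = 1" "free_cumulants \<phi> \<kappa>" "\<phi> 1 = 1"
    and S: "S \<subseteq> {0..n}" "S \<noteq> {}"
  shows "\<Phi> (snd (q_word q a n S)) =
    (\<Sum>\<pi>\<in>NC n. if constant_on_blocks (cyclic_label S) \<pi> then kappa_pi \<kappa> \<pi> a else 0)"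
proof -
  have fin: "finite S" using S(1) finite_subset by blast
  have "\<Phi> (snd (q_word q a n S)) = (\<Prod>j<card S. \<phi> (ordered_prod a {x\<in>{1..n}. cyclic_label S x = j}))"
    by (rule Phi_q_word[OF assms(1,2) fin S(2)])
  also have "\<dots> = (\<Prod>j<card S. \<Sum>\<rho>\<in>NC_on {x\<in>{1..n}. cyclic_label S x = j}. kappa_pi \<kappa> \<rho> a)"
    by (simp add: moment_cumulant_ordered_prod[OF assms(3,4)])
  also have "\<dots> = (\<Sum>\<pi>\<in>{\<pi>\<in>NC_on {x\<in>{1..n}. cyclic_label S x \<in> {..<card S}}.
      constant_on_blocks (cyclic_label S) \<pi>}. kappa_pi \<kappa> \<pi> a)"
    by (rule prod_sum_NC_on_colour_classes[OF _ noncrossing_colouring_cyclic_label[OF fin]]) simp_all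
  also have "{x\<in>{1..n}. cyclic_label S x \<in> {..<card S}} = {1..n}"
    using cyclic_label_less_card[OF fin S(2)] by auto
  finally show ?thesis
    by (simp add: sum.inter_filter finite_NC_on NC_eq_NC_on)
qed

lemma Phi_p_word:
  assumes additive: "\<And>f g. \<Phi> (f + g) = \<Phi> f + \<Phi> g"
    and ind: "cyclic_antimonotone_indep L R \<phi> \<Phi> q" "\<Phi> q = 1"
    and cumulants: "free_cumulants \<phi> \<kappa>" "\<phi> 1 = 1"
  shows "\<Phi> (snd (p_word q a n)) = - (\<Sum>\<pi>\<in>NC n. of_nat (kreweras_card n \<pi>) * kappa_pi \<kappa> \<pi> a)"
proof -
  interpret Phi: additive \<Phi> by unfold_locales (rule additive)
  let ?sign = "\<lambda>S :: nat set. (- 1 :: complex) ^ card S"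
  let ?K = "\<lambda>S \<pi>. if constant_on_blocks (cyclic_label S) \<pi> then kappa_pi \<kappa> \<pi> a else 0"
  have "\<Phi> (snd (p_word q a n)) = (\<Sum>S\<in>Pow {0..n}. ?sign S * \<Phi> (snd (q_word q a n S)))"
    unfolding p_word_expansion snd_sum Phi.sum
    by (intro sum.cong refl) (simp add: signed_def Phi.minus minus_one_power_iff)
  also have "\<dots> = (\<Sum>S\<in>Pow {0..n} - {{}}. ?sign S * \<Phi> (snd (q_word q a n S)))"
    by (rule sum.mono_neutral_right) (auto simp: snd_q_word_empty Phi.zero)
  also have "\<dots> = (\<Sum>S\<in>Pow {0..n} - {{}}. ?sign S * (\<Sum>\<pi>\<in>NC n. ?K S \<pi>))"
    by (intro sum.cong refl) (simp add: Phi_q_word_cumulants[OF ind cumulants])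
  also have "\<dots> = (\<Sum>\<pi>\<in>NC n. kappa_pi \<kappa> \<pi> a *
      of_int (\<Sum>S\<in>Pow {0..n} - {{}}. if constant_on_blocks (cyclic_label S) \<pi> then (- 1) ^ card S else 0))"
    by (simp add: sum_distrib_left sum_distrib_right sum.swap[of _ "NC n"] of_int_sum if_distrib mult.commute
        cong: if_cong)
  also have "\<dots> = (\<Sum>\<pi>\<in>NC n. kappa_pi \<kappa> \<pi> a * (of_nat (card \<pi>) - of_nat (n + 1)))"
    by (intro sum.cong refl) (simp add: sum_signs_constant_on_blocks NC_eq_NC_on)
  also have "\<dots> = - (\<Sum>\<pi>\<in>NC n. of_nat (kreweras_card n \<pi>) * kappa_pi \<kappa> \<pi> a)"
  proof -
    have "card \<pi> \<le> n + 1" if "\<pi> \<in> NC n" for \<pi>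
      using card_NC_on_le[of "{1..n}" \<pi>] that by (simp add: NC_eq_NC_on)
    then show ?thesis
      by (simp add: kreweras_card_def of_nat_diff algebra_simps flip: sum_negf)
  qed
  finally show ?thesis .
qed

end

theorem theorem5p1:
  fixes smA :: "complex \<Rightarrow> 'a::ring_1 \<Rightarrow> 'a"
    and smF :: "complex \<Rightarrow> 'f::ring \<Rightarrow> 'f"
    and L :: "'a \<Rightarrow> 'f \<Rightarrow> 'f" and R :: "'f \<Rightarrow> 'a \<Rightarrow> 'f"
    and \<phi> :: "'a \<Rightarrow> complex" and \<Phi> :: "'f \<Rightarrow> complex"
    and \<kappa> :: "'a list \<Rightarrow> complex"
    and q :: 'f and n :: nat and a :: "nat \<Rightarrow> 'a"
  assumes "ncps_typeB' smA smF L R \<phi> \<Phi>"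
    and "free_cumulants \<phi> \<kappa>"
    and "q * q = q" and "\<Phi> q = 1"
    and "cyclic_antimonotone_indep L R \<phi> \<Phi> q"
    and "n \<ge> 1"
  shows "let p = ((1::'a), - q);
             tilde = (\<lambda>x. Bmult L R p (Bmult L R (x, 0) p))
         in phi' \<Phi> (Bprod L R (map (\<lambda>i. tilde (a i)) [1..<n+1])) =
            - (\<Sum>\<pi>\<in>NC n. of_nat (kreweras_card n \<pi>) * kappa_pi \<kappa> \<pi> a)"
proof -
  have "bimodule_algebra smA smF L R" "\<phi> 1 = 1" "complex_linear_functional smF \<Phi>"
    using assms(1) unfolding ncps_typeB'_def by auto
  then have additive: "\<Phi> (f + g) = \<Phi> f + \<Phi> g" for f g
    by (simp add: complex_linear_functional_def)
  interpret bimodule_extension L R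
    by (rule bimodule_algebra_imp_extension) fact
  show ?thesis
    unfolding Let_def phi'_def Bprod_sandwiches_eq_p_word[OF assms(3,6)]
    by (rule Phi_p_word[OF additive assms(5,4,2) \<open>\<phi> 1 = 1\<close>])
qed

end
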